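(* Let $G$ be a simple, undirected, connected graph on $N>2$ vertices with edge set $E$ and degree sequence $d_1\le d_2\le\cdots\le d_N$. Then $$R^+(G)\ge N(N-2)+2|E|\sum_{j=1}^N\frac{1}{d_j}-\frac{4|E|}{1+d_1}.$$
   Context: For vertices $i,j$ of $G$, $R_{ij}$ denotes the effective resistance between $i$ and $j$ when every edge of $G$ is a unit resistor. The additive degree-Kirchhoff index is $R^+(G)=\sum_{i<j}(d_i+d_j)R_{ij}$, where $d_i$ is the degree of vertex $i$. *)

theory Defs
  imports Complex_Main
begin

definition simple_graph :: "nat \<Rightarrow> (nat \<Rightarrow> nat \<Rightarrow> bool) \<Rightarrow> bool" where
  "simple_graph n E \<longleftrightarrow>
     (\<forall>i j. E i j \<longrightarrow> i < n \<and> j < n) \<and>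
     (\<forall>i j. E i j \<longrightarrow> E j i) \<and> (\<forall>i. \<not> E i i)"

definition connected_graph :: "nat \<Rightarrow> (nat \<Rightarrow> nat \<Rightarrow> bool) \<Rightarrow> bool" where
  "connected_graph n E \<longleftrightarrow> (\<forall>i<n. \<forall>j<n. E\<^sup>*\<^sup>* i j)"

definition degree :: "nat \<Rightarrow> (nat \<Rightarrow> nat \<Rightarrow> bool) \<Rightarrow> nat \<Rightarrow> nat" where
  "degree n E i = card {j. j < n \<and> E i j}"

definition num_edges :: "nat \<Rightarrow> (nat \<Rightarrow> nat \<Rightarrow> bool) \<Rightarrow> nat" where
  "num_edges n E = card {(i, j). i < j \<and> j < n \<and> E i j}"

text \<open>Effective resistance between i and j with unit resistors on every edge:
the potential difference x i - x j of a potential x on the vertices satisfying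
Kirchhoff's current law when a unit current enters at i and leaves at j
(net current out of v through its edges is sum over neighbours w of x v - x w).\<close>

definition eff_resistance :: "nat \<Rightarrow> (nat \<Rightarrow> nat \<Rightarrow> bool) \<Rightarrow> nat \<Rightarrow> nat \<Rightarrow> real" where
  "eff_resistance n E i j =
     (if i = j then 0 else
      (SOME r. \<exists>x :: nat \<Rightarrow> real.
         (\<forall>v<n. (\<Sum>w\<in>{w. w < n \<and> E v w}. x v - x w) =
                 (if v = i then 1 else if v = j then -1 else 0))
         \<and> r = x i - x j))"

definition add_deg_kirchhoff :: "nat \<Rightarrow> (nat \<Rightarrow> nat \<Rightarrow> bool) \<Rightarrow> real" where
  "add_deg_kirchhoff n E =
     (\<Sum>j<n. \<Sum>i<j. real (degree n E i + degree n E j) * eff_resistance n E i j)"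

end

theory Submission
  imports Defs "Jordan_Normal_Form.Determinant"
begin

text \<open>Effective resistance satisfies the dual (Thomson) principle
  \<open>R\<^sub>i\<^sub>j \<ge> 2 (y\<^sub>i - y\<^sub>j) - y\<^sup>T L y\<close> for every test potential \<open>y\<close>, because
  \<open>(x - y)\<^sup>T L (x - y) \<ge> 0\<close> for the true potential \<open>x\<close>. Testing with \<open>y\<close> supported on
  \<open>{i, j}\<close> gives \<open>R\<^sub>i\<^sub>j \<ge> 1/d\<^sub>i + 1/d\<^sub>j\<close> for non-adjacent \<open>i, j\<close> and
  \<open>R\<^sub>i\<^sub>j \<ge> (d\<^sub>i + d\<^sub>j - 2)/(d\<^sub>i d\<^sub>j - 1)\<close> for adjacent ones; the latter falls short of
  \<open>1/d\<^sub>i + 1/d\<^sub>j\<close> by at most \<open>4/((d\<^sub>i + d\<^sub>j)(1 + d\<^sub>1))\<close>. Summing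
  \<open>(d\<^sub>i + d\<^sub>j)(1/d\<^sub>i + 1/d\<^sub>j)\<close> over all pairs gives \<open>N(N-2) + 2|E| \<Sum> 1/d\<^sub>k\<close>,
  and each of the \<open>|E|\<close> edges loses at most \<open>4/(1 + d\<^sub>1)\<close>, where \<open>d\<^sub>1\<close> is the minimum degree.\<close>

hide_const (open) Polynomial.degree

section \<open>The graph Laplacian\<close>

definition laplacian :: "nat \<Rightarrow> (nat \<Rightarrow> nat \<Rightarrow> bool) \<Rightarrow> (nat \<Rightarrow> real) \<Rightarrow> nat \<Rightarrow> real" where
  "laplacian N E x v = (\<Sum>w\<in>{w. w < N \<and> E v w}. x v - x w)"

definition laplacian_form :: "nat \<Rightarrow> (nat \<Rightarrow> nat \<Rightarrow> bool) \<Rightarrow> (nat \<Rightarrow> real) \<Rightarrow> (nat \<Rightarrow> real) \<Rightarrow> real" where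
  "laplacian_form N E x y = (\<Sum>v<N. y v * laplacian N E x v)"

lemma sum_neighbours_eq_sum_if:
  "(\<Sum>w\<in>{w. w < (N::nat) \<and> E v w}. g w) = (\<Sum>w<N. if E v w then g w else 0)"
proof -
  have "{w. w < N \<and> E v w} = {w\<in>{..<N}. E v w}" by auto
  then show ?thesis by (simp add: sum.inter_filter[symmetric])
qed

lemma sum_neighbours_swap:
  assumes "simple_graph N E"
  shows "(\<Sum>v<N. \<Sum>w\<in>{w. w < N \<and> E v w}. g v w) = (\<Sum>v<N. \<Sum>w\<in>{w. w < N \<and> E v w}. g w v)"
proof -
  have sym: "\<And>v w. E v w = E w v" using assms unfolding simple_graph_def by blast
  have "(\<Sum>v<N. \<Sum>w\<in>{w. w < N \<and> E v w}. g v w) = (\<Sum>v<N. \<Sum>w<N. if E v w then g v w else 0)"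
    by (simp add: sum_neighbours_eq_sum_if)
  also have "\<dots> = (\<Sum>w<N. \<Sum>v<N. if E w v then g v w else 0)"
    by (subst sum.swap) (simp add: sym)
  also have "\<dots> = (\<Sum>v<N. \<Sum>w\<in>{w. w < N \<and> E v w}. g w v)"
    by (simp add: sum_neighbours_eq_sum_if)
  finally show ?thesis .
qed

lemma sum_laplacian_eq_0:
  assumes "simple_graph N E"
  shows "(\<Sum>v<N. laplacian N E x v) = 0"
proof -
  have "(\<Sum>v<N. laplacian N E x v) = (\<Sum>v<N. \<Sum>w\<in>{w. w < N \<and> E v w}. x w - x v)"
    unfolding laplacian_def by (rule sum_neighbours_swap[OF assms])
  also have "\<dots> = - (\<Sum>v<N. laplacian N E x v)"
    unfolding laplacian_def by (simp add: sum_negf[symmetric])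
  finally show ?thesis by linarith
qed

lemma laplacian_form_energy:
  assumes "simple_graph N E"
  shows "2 * laplacian_form N E z z = (\<Sum>v<N. \<Sum>w\<in>{w. w < N \<and> E v w}. (z v - z w)\<^sup>2)"
proof -
  have "laplacian_form N E z z = (\<Sum>v<N. \<Sum>w\<in>{w. w < N \<and> E v w}. z v * (z v - z w))"
    unfolding laplacian_form_def laplacian_def by (simp add: sum_distrib_left)
  moreover have "\<dots> = (\<Sum>v<N. \<Sum>w\<in>{w. w < N \<and> E v w}. z w * (z w - z v))"
    by (rule sum_neighbours_swap[OF assms])
  ultimately have "2 * laplacian_form N E z z
      = (\<Sum>v<N. \<Sum>w\<in>{w. w < N \<and> E v w}. z v * (z v - z w) + z w * (z w - z v))"
    by (simp add: sum.distrib)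
  then show ?thesis by (simp add: power2_eq_square algebra_simps)
qed

lemma laplacian_form_nonneg:
  assumes "simple_graph N E"
  shows "laplacian_form N E z z \<ge> 0"
proof -
  have "0 \<le> (\<Sum>v<N. \<Sum>w\<in>{w. w < N \<and> E v w}. (z v - z w)\<^sup>2)"
    by (intro sum_nonneg) auto
  with laplacian_form_energy[OF assms, of z] show ?thesis by linarith
qed

lemma laplacian_form_commute:
  assumes "simple_graph N E"
  shows "laplacian_form N E x y = laplacian_form N E y x"
proof -
  have "laplacian_form N E x y - laplacian_form N E y x
      = (\<Sum>v<N. \<Sum>w\<in>{w. w < N \<and> E v w}. x v * y w - y v * x w)"
    unfolding laplacian_form_def laplacian_def
    by (simp add: sum_distrib_left sum_subtractf[symmetric] algebra_simps)
  also have "\<dots> = (\<Sum>v<N. \<Sum>w\<in>{w. w < N \<and> E v w}. x w * y v - y w * x v)"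
    by (rule sum_neighbours_swap[OF assms])
  also have "\<dots> = - (\<Sum>v<N. \<Sum>w\<in>{w. w < N \<and> E v w}. x v * y w - y v * x w)"
    by (simp add: sum_negf[symmetric] algebra_simps)
  finally show ?thesis
    using \<open>laplacian_form N E x y - laplacian_form N E y x = _\<close> by linarith
qed

lemma laplacian_form_diff:
  "laplacian_form N E (\<lambda>k. x k - y k) (\<lambda>k. x k - y k)
     = laplacian_form N E x x - laplacian_form N E x y - laplacian_form N E y x + laplacian_form N E y y"
  unfolding laplacian_form_def laplacian_def
  by (simp add: sum_subtractf sum.distrib algebra_simps sum_distrib_left)

lemma connected_eq_on_edges_imp_const:
  assumes "simple_graph N E" and "connected_graph N E"
    and "\<And>v w. v < N \<Longrightarrow> w < N \<Longrightarrow> E v w \<Longrightarrow> z v = z w"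
    and "j < N" and "k < N"
  shows "z k = z j"
proof -
  have "E\<^sup>*\<^sup>* j k" using assms(2,4,5) unfolding connected_graph_def by blast
  then show ?thesis
  proof (induction rule: rtranclp_induct)
    case (step c d)
    then have "c < N" "d < N" using assms(1) unfolding simple_graph_def by auto
    with assms(3) step show ?case by metis
  qed simp
qed

lemma laplacian_form_eq_0_imp_const:
  assumes "simple_graph N E" and "connected_graph N E" and "laplacian_form N E z z = 0"
    and "j < N" and "k < N"
  shows "z k = z j"
proof (rule connected_eq_on_edges_imp_const[OF assms(1,2) _ assms(4,5)])
  fix v w assume v: "v < N" and w: "w < N" and "E v w"
  have "(\<Sum>v<N. \<Sum>w\<in>{w. w < N \<and> E v w}. (z v - z w)\<^sup>2) = 0"
    using laplacian_form_energy[OF assms(1), of z] assms(3) by simp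
  then have "(\<Sum>w\<in>{w. w < N \<and> E v w}. (z v - z w)\<^sup>2) = 0"
    using v by (subst (asm) sum_nonneg_eq_0_iff) (auto intro: sum_nonneg)
  then have "(z v - z w)\<^sup>2 = 0" using w \<open>E v w\<close> by (subst (asm) sum_nonneg_eq_0_iff) auto
  then show "z v = z w" by simp
qed

section \<open>Existence of the potential\<close>

text \<open>Grounding vertex \<open>j\<close> removes the constants from the kernel of the Laplacian.\<close>

definition grounded_laplacian_mat :: "nat \<Rightarrow> (nat \<Rightarrow> nat \<Rightarrow> bool) \<Rightarrow> nat \<Rightarrow> real mat" where
  "grounded_laplacian_mat N E j = mat N N (\<lambda>(r, c).
     if r = j then (if c = j then 1 else 0)
     else (if c = r then real (degree N E r) else 0) - (if E r c then 1 else 0))"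

lemma grounded_laplacian_mult_vec:
  assumes "z \<in> carrier_vec N" and "r < N"
  shows "(grounded_laplacian_mat N E j *\<^sub>v z) $ r
           = (if r = j then z $ j else laplacian N E (\<lambda>k. z $ k) r)"
proof -
  let ?M = "grounded_laplacian_mat N E j"
  have "(?M *\<^sub>v z) $ r = (\<Sum>c<N. ?M $$ (r, c) * z $ c)"
    using assms by (simp add: grounded_laplacian_mat_def scalar_prod_def lessThan_atLeast0)
  also have "\<dots> = (if r = j then z $ j else laplacian N E (\<lambda>k. z $ k) r)"
  proof (cases "r = j")
    case True
    have "(\<Sum>c<N. ?M $$ (r, c) * z $ c) = (\<Sum>c<N. if c = j then z $ c else 0)"
      using True assms(2) by (intro sum.cong) (auto simp: grounded_laplacian_mat_def)
    then show ?thesis using True assms(2) by simp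
  next
    case False
    have "(\<Sum>c<N. ?M $$ (r, c) * z $ c)
        = (\<Sum>c<N. (if c = r then real (degree N E r) * z $ r else 0) - (if E r c then z $ c else 0))"
      using False assms(2) by (intro sum.cong) (auto simp: grounded_laplacian_mat_def algebra_simps)
    also have "\<dots> = laplacian N E (\<lambda>k. z $ k) r"
      using assms(2) unfolding laplacian_def Defs.degree_def
      by (simp add: sum_subtractf sum_neighbours_eq_sum_if)
    finally show ?thesis using False by simp
  qed
  finally show ?thesis .
qed

lemma det_grounded_laplacian_nonzero:
  assumes sg: "simple_graph N E" and cg: "connected_graph N E" and j: "j < N"
  shows "det (grounded_laplacian_mat N E j) \<noteq> 0"
proof
  let ?M = "grounded_laplacian_mat N E j"
  assume "det ?M = 0"
  then obtain v where v: "v \<in> carrier_vec N" "v \<noteq> 0\<^sub>v N" "?M *\<^sub>v v = 0\<^sub>v N"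
    using det_0_iff_vec_prod_zero[of ?M N] by (auto simp: grounded_laplacian_mat_def)
  define z where "z = (\<lambda>k. v $ k)"
  have zj: "z j = 0"
    using grounded_laplacian_mult_vec[where E = E and j = j, OF v(1) j] v(3) j unfolding z_def by simp
  have "laplacian N E z r = 0" if "r < N" "r \<noteq> j" for r
    using grounded_laplacian_mult_vec[where E = E and j = j, OF v(1) that(1)] v(3) that unfolding z_def by simp
  then have "laplacian_form N E z z = 0"
    unfolding laplacian_form_def by (intro sum.neutral) (use zj in auto)
  then have "z k = 0" if "k < N" for k
    using laplacian_form_eq_0_imp_const[OF sg cg \<open>laplacian_form N E z z = 0\<close> j that] zj by simp
  then have "v = 0\<^sub>v N" using v(1) unfolding z_def by (intro eq_vecI) auto
  with v(2) show False by simp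
qed

lemma exists_unit_current_potential:
  assumes sg: "simple_graph N E" and cg: "connected_graph N E"
    and i: "i < N" and j: "j < N" and ij: "i \<noteq> j"
  shows "\<exists>x. \<forall>v<N. laplacian N E x v = (if v = i then 1 else if v = j then -1 else 0)"
proof -
  let ?M = "grounded_laplacian_mat N E j"
  have M: "?M \<in> carrier_mat N N" by (simp add: grounded_laplacian_mat_def)
  have "?M \<in> Units (ring_mat TYPE(real) N undefined)"
    by (rule det_non_zero_imp_unit[OF M det_grounded_laplacian_nonzero[OF sg cg j]])
  then obtain B where B: "B \<in> carrier_mat N N" "?M * B = 1\<^sub>m N"
    unfolding Units_def ring_mat_def by auto
  define xv where "xv = B *\<^sub>v unit_vec N i"
  have xv: "xv \<in> carrier_vec N" unfolding xv_def using B by simp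
  have "?M *\<^sub>v xv = unit_vec N i"
    unfolding xv_def using B M by (simp add: assoc_mult_mat_vec[symmetric, of _ N N _ N])
  then have off_j: "laplacian N E (\<lambda>k. xv $ k) v = (if v = i then 1 else 0)" if "v < N" "v \<noteq> j" for v
    using grounded_laplacian_mult_vec[where E = E and j = j, OF xv that(1)] that by (simp add: unit_vec_def)
  have "(\<Sum>v<N. laplacian N E (\<lambda>k. xv $ k) v)
      = laplacian N E (\<lambda>k. xv $ k) j + (\<Sum>v\<in>{..<N}-{j}. if v = i then 1 else 0)"
    using j off_j by (simp add: sum.remove)
  then have "laplacian N E (\<lambda>k. xv $ k) j = -1"
    using sum_laplacian_eq_0[OF sg] i ij by (simp add: sum.delta)
  then show ?thesis using off_j ij by (intro exI[of _ "\<lambda>k. xv $ k"]) auto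
qed

section \<open>Lower bounds for the effective resistance\<close>

lemma eff_resistance_ge_test_potential:
  assumes sg: "simple_graph N E" and cg: "connected_graph N E"
    and i: "i < N" and j: "j < N" and ij: "i \<noteq> j"
  shows "eff_resistance N E i j \<ge> 2 * (y i - y j) - laplacian_form N E y y"
proof -
  let ?P = "\<lambda>r. \<exists>x :: nat \<Rightarrow> real.
         (\<forall>v<N. (\<Sum>w\<in>{w. w < N \<and> E v w}. x v - x w) =
                 (if v = i then 1 else if v = j then -1 else 0))
         \<and> r = x i - x j"
  have "\<exists>r. ?P r" using exists_unit_current_potential[OF assms] unfolding laplacian_def by blast
  \<comment> \<open>the bound holds for every unit current potential\<close>
  then have "?P (SOME r. ?P r)" by (rule someI_ex)
  then obtain x where x: "\<And>v. v < N \<Longrightarrow> laplacian N E x v = (if v = i then 1 else if v = j then -1 else 0)"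
     and R: "eff_resistance N E i j = x i - x j"
    unfolding eff_resistance_def laplacian_def using ij by auto
  have current: "laplacian_form N E x z = z i - z j" for z
  proof -
    have "laplacian_form N E x z = (\<Sum>v<N. (if v = i then z v else 0) - (if v = j then z v else 0))"
      unfolding laplacian_form_def using x ij by (intro sum.cong) auto
    then show ?thesis using i j by (simp add: sum_subtractf)
  qed
  have "0 \<le> laplacian_form N E (\<lambda>k. x k - y k) (\<lambda>k. x k - y k)"
    by (rule laplacian_form_nonneg[OF sg])
  also have "\<dots> = (x i - x j) - 2 * (y i - y j) + laplacian_form N E y y"
    using current laplacian_form_commute[OF sg, of y x] by (simp add: laplacian_form_diff)
  finally show ?thesis using R by linarith
qed

lemma laplacian_form_two_point:
  fixes a b :: real
  assumes sg: "simple_graph N E" and i: "i < N" and j: "j < N" and ij: "i \<noteq> j"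
  defines "y \<equiv> \<lambda>k. if k = i then a else if k = j then - b else 0"
  shows "laplacian_form N E y y
           = a\<^sup>2 * real (degree N E i) + b\<^sup>2 * real (degree N E j) + 2 * a * b * (if E i j then 1 else 0)"
proof -
  have irr: "\<And>v. \<not> E v v" and sym: "E j i = E i j"
    using sg unfolding simple_graph_def by blast+
  have nb: "(\<Sum>w\<in>{w. w < N \<and> E u w}. y w) = (if E u i then a else 0) - (if E u j then b else 0)" for u
  proof -
    have "(\<Sum>w\<in>{w. w < N \<and> E u w}. y w)
        = (\<Sum>w\<in>{w. w < N \<and> E u w}. (if w = i then a else 0) - (if w = j then b else 0))"
      unfolding y_def using ij by (intro sum.cong) auto
    then show ?thesis using i j by (simp add: sum_subtractf)
  qed
  have L: "laplacian N E y u = y u * real (degree N E u) - (\<Sum>w\<in>{w. w < N \<and> E u w}. y w)" for u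
    unfolding laplacian_def Defs.degree_def by (simp add: sum_subtractf)
  have "y i = a" "y j = - b" using ij by (simp_all add: y_def)
  then have Li: "laplacian N E y i = a * real (degree N E i) + (if E i j then b else 0)"
    and Lj: "laplacian N E y j = - b * real (degree N E j) - (if E i j then a else 0)"
    using L[of i] L[of j] nb[of i] nb[of j] irr sym by simp_all
  have "laplacian_form N E y y
      = (\<Sum>v<N. (if v = i then a * laplacian N E y i else 0) - (if v = j then b * laplacian N E y j else 0))"
    unfolding laplacian_form_def y_def using ij by (intro sum.cong) auto
  also have "\<dots> = a * laplacian N E y i - b * laplacian N E y j"
    using i j by (simp add: sum_subtractf)
  finally show ?thesis unfolding Li Lj by (simp add: power2_eq_square algebra_simps)
qed

lemma eff_resistance_ge_two_point:
  assumes "simple_graph N E" and "connected_graph N E"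
    and "i < N" and "j < N" and "i \<noteq> j"
  shows "eff_resistance N E i j \<ge> 2 * (a + b)
           - (a\<^sup>2 * real (degree N E i) + b\<^sup>2 * real (degree N E j) + 2 * a * b * (if E i j then 1 else 0))"
  using eff_resistance_ge_test_potential[OF assms, of "\<lambda>k. if k = i then a else if k = j then - b else 0"]
    laplacian_form_two_point[OF assms(1,3-5), of a b] assms(5) by simp

lemma degree_ge_1:
  assumes sg: "simple_graph N E" and cg: "connected_graph N E" and N: "N \<ge> 2" and v: "v < N"
  shows "degree N E v \<ge> 1"
proof -
  define u where "u = (if v = 0 then 1 else (0::nat))"
  have u: "u < N" "u \<noteq> v" using N v unfolding u_def by auto
  have "E\<^sup>*\<^sup>* v u" using cg u v unfolding connected_graph_def by blast
  then obtain w where "E v w" using u(2) by (cases rule: converse_rtranclpE) auto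
  then have "w \<in> {w. w < N \<and> E v w}" using sg unfolding simple_graph_def by auto
  then have "card {w. w < N \<and> E v w} > 0" by (subst card_gt_0_iff) auto
  then show ?thesis unfolding Defs.degree_def by simp
qed

lemma eff_resistance_nonadjacent_ge:
  assumes "simple_graph N E" and "connected_graph N E" and "N \<ge> 2"
    and "i < N" and "j < N" and "i \<noteq> j" and "\<not> E i j"
  shows "eff_resistance N E i j \<ge> 1 / real (degree N E i) + 1 / real (degree N E j)"
proof -
  have "real (degree N E k) \<noteq> 0" if "k < N" for k
    using degree_ge_1[OF assms(1-3) that] by simp
  then have "(1 / real (degree N E k))\<^sup>2 * real (degree N E k) = 1 / real (degree N E k)" if "k < N" for k
    using that by (simp add: power2_eq_square)
  then show ?thesis
    using eff_resistance_ge_two_point[OF assms(1,2,4-6), of "1 / real (degree N E i)" "1 / real (degree N E j)"]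
      assms(4,5,7) by simp
qed

text \<open>Two adjacent vertices of degree 1 would form a whole component.\<close>

lemma adjacent_degree_product_ge_2:
  assumes sg: "simple_graph N E" and cg: "connected_graph N E" and N: "N > 2" and e: "E i j"
  shows "degree N E i * degree N E j \<ge> 2"
proof (rule ccontr)
  assume small: "\<not> ?thesis"
  have ij: "i < N" "j < N" "i \<noteq> j" and ji: "E j i" using sg e unfolding simple_graph_def by auto
  have "degree N E i \<ge> 1" "degree N E j \<ge> 1" using degree_ge_1[OF sg cg] N ij by auto
  moreover have "degree N E i \<le> degree N E i * degree N E j" "degree N E j \<le> degree N E i * degree N E j"
    using calculation by simp_all
  ultimately have "degree N E i = 1" "degree N E j = 1" using small by linarith+
  have single: "{w. w < N \<and> E u w} = {v}" if u: "degree N E u = 1" and "v < N" and "E u v" for u v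
  proof -
    obtain x where x: "{w. w < N \<and> E u w} = {x}"
      using u unfolding Defs.degree_def by (rule card_1_singletonE)
    moreover have "v \<in> {w. w < N \<and> E u w}" using \<open>v < N\<close> \<open>E u v\<close> by simp
    ultimately show ?thesis by (simp only: singleton_iff)
  qed
  have nbi: "{w. w < N \<and> E i w} = {j}" and nbj: "{w. w < N \<and> E j w} = {i}"
    using single[OF \<open>degree N E i = 1\<close> ij(2) e] single[OF \<open>degree N E j = 1\<close> ij(1) ji] .
  define k where "k = (if 0 \<noteq> i \<and> 0 \<noteq> j then 0 else if 1 \<noteq> i \<and> 1 \<noteq> j then 1 else (2::nat))"
  have k: "k < N" "k \<noteq> i" "k \<noteq> j" using N ij(3) unfolding k_def by auto
  have "E\<^sup>*\<^sup>* i k" using cg k ij unfolding connected_graph_def by blast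
  then have "k \<in> {i, j}"
  proof (induction rule: rtranclp_induct)
    case (step c d)
    have "d < N" using step.hyps(2) sg unfolding simple_graph_def by auto
    then show ?case using step nbi nbj by (auto simp: set_eq_iff)
  qed simp
  with k show False by auto
qed

text \<open>The test potential of \<open>eff_resistance_ge_two_point\<close> is optimal for these \<open>a, b\<close>,
  the solution of \<open>a x + b = a + b y = 1\<close>.\<close>

lemma two_point_bound_at_optimum:
  fixes x y :: real
  assumes "x * y > 1"
  defines "a \<equiv> (y - 1) / (x * y - 1)" and "b \<equiv> (x - 1) / (x * y - 1)"
  shows "2 * (a + b) - (a\<^sup>2 * x + b\<^sup>2 * y + 2 * a * b) = (x + y - 2) / (x * y - 1)"
proof -
  have "x * y - 1 \<noteq> 0" using assms(1) by simp
  then show ?thesis unfolding a_def b_def by (simp add: divide_simps power2_eq_square) (simp add: algebra_simps)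
qed

lemma eff_resistance_adjacent_ge:
  assumes "simple_graph N E" and "connected_graph N E" and "N > 2" and "E i j"
  shows "eff_resistance N E i j
           \<ge> (real (degree N E i) + real (degree N E j) - 2) / (real (degree N E i) * real (degree N E j) - 1)"
proof -
  have ij: "i < N" "j < N" "i \<noteq> j" using assms(1,4) unfolding simple_graph_def by auto
  have "real (degree N E i) * real (degree N E j) > 1"
    using adjacent_degree_product_ge_2[OF assms] by (simp flip: of_nat_mult)
  from two_point_bound_at_optimum[OF this] show ?thesis
    using eff_resistance_ge_two_point[OF assms(1,2) ij,
        of "(real (degree N E j) - 1) / (real (degree N E i) * real (degree N E j) - 1)"
           "(real (degree N E i) - 1) / (real (degree N E i) * real (degree N E j) - 1)"] assms(4)
    by simp
qed

lemma pair_deficit_le_ordered: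
  fixes a b m :: real
  assumes a1: "1 \<le> a" and ab: "a \<le> b" and "0 \<le> m" and "m \<le> a" and p2: "a * b \<ge> 2"
  shows "(a + b) * (1/a + 1/b) - (a + b) * ((a + b - 2) / (a * b - 1)) \<le> 4 / (1 + m)"
proof -
  have pos: "a > 0" "b > 0" "a * b - 1 > 0" using a1 ab p2 by auto
  have "2*a\<^sup>2 - a + 1 \<ge> 0" using a1 by (simp add: power2_eq_square)
  then have "(2*a\<^sup>2 - a + 1) * b - a - a\<^sup>2 \<ge> (2*a\<^sup>2 - a + 1) * a - a - a\<^sup>2"
    using mult_left_mono[OF ab] by simp
  moreover have "(2*a\<^sup>2 - a + 1) * a - a - a\<^sup>2 = 2 * a\<^sup>2 * (a - 1)"
    by (simp add: algebra_simps power2_eq_square)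
  moreover have "2 * a\<^sup>2 * (a - 1) \<ge> 0" using a1 by simp
  ultimately have "(2*a\<^sup>2 - a + 1) * b - a - a\<^sup>2 \<ge> 0" by linarith
  then have "(b - a) * ((2*a\<^sup>2 - a + 1) * b - a - a\<^sup>2) \<ge> 0"
    using ab by simp
  moreover have "4*(a*b)*(a*b - 1) - (a + b)*(2*a*b - (a + b))*(1 + a)
      = (b - a) * ((2*a\<^sup>2 - a + 1) * b - a - a\<^sup>2)"
    by (simp add: algebra_simps power2_eq_square)
  ultimately have key: "(a + b)*(2*a*b - (a + b))*(1 + a) \<le> 4*(a*b)*(a*b - 1)" by linarith
  have "(a + b) * (1/a + 1/b) - (a + b) * ((a + b - 2) / (a * b - 1))
      = (a + b)*(2*a*b - (a + b)) / ((a*b)*(a*b - 1))"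
    using pos by (simp add: field_simps)
  also have "\<dots> \<le> 4 / (1 + a)"
    using key pos by (simp add: divide_simps mult.commute mult.left_commute)
  also have "\<dots> \<le> 4 / (1 + m)" using assms by (intro divide_left_mono) auto
  finally show ?thesis .
qed

lemma pair_deficit_le:
  fixes a b m :: real
  assumes "1 \<le> a" and "1 \<le> b" and "0 \<le> m" and "m \<le> a" and "m \<le> b" and "a * b \<ge> 2"
  shows "(a + b) * (1/a + 1/b) - (a + b) * ((a + b - 2) / (a * b - 1)) \<le> 4 / (1 + m)"
proof (cases "a \<le> b")
  case True
  then show ?thesis using pair_deficit_le_ordered assms by blast
next
  case False
  then show ?thesis using pair_deficit_le_ordered[of b a m] assms
    by (simp add: add.commute mult.commute)
qed

lemma degree_sum_mult_eff_resistance_ge: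
  assumes sg: "simple_graph N E" and cg: "connected_graph N E" and N: "N > 2"
    and "i < j" and "j < N"
  defines "d \<equiv> \<lambda>k. real (degree N E k)" and "m \<equiv> real (Min (degree N E ` {..<N}))"
  shows "real (degree N E i + degree N E j) * eff_resistance N E i j
           \<ge> (d i + d j) * (1 / d i + 1 / d j) - (if E i j then 4 / (1 + m) else 0)"
proof -
  have ij: "i < N" "i \<noteq> j" using assms(4,5) by auto
  have d1: "d i \<ge> 1" "d j \<ge> 1" using degree_ge_1[OF sg cg] N ij assms(5) unfolding d_def by auto
  have "m \<le> d i" "m \<le> d j" unfolding m_def d_def using ij assms(5) by simp_all
  have dsum: "real (degree N E i + degree N E j) = d i + d j" unfolding d_def by simp
  show ?thesis
  proof (cases "E i j")
    case False
    then have "1 / d i + 1 / d j \<le> eff_resistance N E i j"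
      using eff_resistance_nonadjacent_ge[OF sg cg _ ij(1) assms(5) ij(2)] N unfolding d_def by simp
    then have "(d i + d j) * (1 / d i + 1 / d j) \<le> (d i + d j) * eff_resistance N E i j"
      using d1 by (intro mult_left_mono) auto
    then show ?thesis using False unfolding dsum by simp
  next
    case True
    have "d i * d j \<ge> 2" using adjacent_degree_product_ge_2[OF sg cg N True]
      unfolding d_def by (metis of_nat_mult of_nat_numeral of_nat_le_iff)
    then have "(d i + d j) * (1 / d i + 1 / d j) - 4 / (1 + m)
        \<le> (d i + d j) * ((d i + d j - 2) / (d i * d j - 1))"
      using pair_deficit_le[of "d i" "d j" m] d1 \<open>m \<le> d i\<close> \<open>m \<le> d j\<close> by (simp add: m_def)
    also have "\<dots> \<le> (d i + d j) * eff_resistance N E i j"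
      using eff_resistance_adjacent_ge[OF sg cg N True] d1 unfolding d_def by (intro mult_left_mono) auto
    finally show ?thesis using True unfolding dsum by simp
  qed
qed

lemma sum_lower_triangle_symmetric:
  fixes f :: "nat \<Rightarrow> nat \<Rightarrow> real"
  assumes "\<And>i j. f i j = f j i"
  shows "2 * (\<Sum>j<n. \<Sum>i<j. f i j) = (\<Sum>i<n. \<Sum>j<n. f i j) - (\<Sum>i<n. f i i)"
proof (induction n)
  case (Suc n)
  have "(\<Sum>i<Suc n. \<Sum>j<Suc n. f i j)
      = (\<Sum>i<n. \<Sum>j<n. f i j) + (\<Sum>i<n. f i n) + (\<Sum>j<n. f n j) + f n n"
    by (simp add: sum.distrib)
  with Suc assms show ?case by (simp add: algebra_simps)
qed simp

lemma sum_pairs_sum_mult_sum_inverse: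
  fixes d :: "nat \<Rightarrow> real"
  assumes "\<And>k. k < n \<Longrightarrow> d k \<noteq> 0"
  shows "(\<Sum>j<n. \<Sum>i<j. (d i + d j) * (1 / d i + 1 / d j))
           = real n * (real n - 2) + (\<Sum>k<n. d k) * (\<Sum>k<n. 1 / d k)"
proof -
  let ?f = "\<lambda>i j. (d i + d j) * (1 / d i + 1 / d j)"
  have "(\<Sum>i<n. \<Sum>j<n. ?f i j) = (\<Sum>i<n. \<Sum>j<n. 2 + d i * (1 / d j) + d j * (1 / d i))"
    using assms by (intro sum.cong refl) (auto simp: field_simps)
  also have "\<dots> = (\<Sum>i<n. \<Sum>j<n. 2) + (\<Sum>i<n. \<Sum>j<n. d i * (1 / d j))
      + (\<Sum>i<n. \<Sum>j<n. d j * (1 / d i))"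
    by (simp only: sum.distrib)
  also have "(\<Sum>i<n. \<Sum>j<n. d i * (1 / d j)) = (\<Sum>k<n. d k) * (\<Sum>k<n. 1 / d k)"
    by (rule sum_product[symmetric])
  also have "(\<Sum>i<n. \<Sum>j<n. d j * (1 / d i)) = (\<Sum>k<n. d k) * (\<Sum>k<n. 1 / d k)"
    by (subst sum.swap) (rule sum_product[symmetric])
  finally have full: "(\<Sum>i<n. \<Sum>j<n. ?f i j)
      = 2 * real n * real n + 2 * ((\<Sum>k<n. d k) * (\<Sum>k<n. 1 / d k))"
    by simp
  have diag: "(\<Sum>i<n. ?f i i) = (\<Sum>i<n. 4)"
    using assms by (intro sum.cong) (auto simp: field_simps)
  have "2 * (\<Sum>j<n. \<Sum>i<j. ?f i j) = (\<Sum>i<n. \<Sum>j<n. ?f i j) - (\<Sum>i<n. ?f i i)"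
    by (rule sum_lower_triangle_symmetric) (simp add: algebra_simps)
  then show ?thesis unfolding full diag by (simp add: algebra_simps)
qed

lemma of_nat_card_filter_lessThan:
  "of_nat (card {i. i < (n::nat) \<and> P i}) = (\<Sum>i<n. if P i then 1 else (0::'a::semiring_1))"
proof -
  have "{i. i < n \<and> P i} = {i\<in>{..<n}. P i}" by auto
  moreover have "(\<Sum>i<n. if P i then 1 else (0::'a)) = (\<Sum>i\<in>{i\<in>{..<n}. P i}. 1)"
    by (rule sum.inter_filter[symmetric]) simp
  ultimately show ?thesis by simp
qed

lemma of_nat_num_edges:
  "of_nat (num_edges n E) = (\<Sum>j<n. \<Sum>i<j. if E i j then 1 else (0::'a::semiring_1))"
proof (induction n)
  case (Suc n)
  have "{(i, j). i < j \<and> j < Suc n \<and> E i j}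
      = {(i, j). i < j \<and> j < n \<and> E i j} \<union> (\<lambda>i. (i, n)) ` {i. i < n \<and> E i n}"
    by (auto simp: less_Suc_eq)
  moreover have "finite {(i, j). i < j \<and> j < n \<and> E i j}"
    by (rule finite_subset[of _ "{..<n} \<times> {..<n}"]) auto
  then have "card ({(i, j). i < j \<and> j < n \<and> E i j} \<union> (\<lambda>i. (i, n)) ` {i. i < n \<and> E i n})
      = card {(i, j). i < j \<and> j < n \<and> E i j} + card ((\<lambda>i. (i, n)) ` {i. i < n \<and> E i n})"
    by (intro card_Un_disjoint) auto
  moreover have "card ((\<lambda>i. (i, n)) ` {i. i < n \<and> E i n}) = card {i. i < n \<and> E i n}"
    by (rule card_image) (auto simp: inj_on_def)
  ultimately have "num_edges (Suc n) E = num_edges n E + card {i. i < n \<and> E i n}"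
    unfolding num_edges_def by simp
  with Suc show ?case by (simp add: of_nat_card_filter_lessThan)
qed (simp add: num_edges_def)

lemma sum_degree_eq_twice_num_edges:
  assumes "simple_graph N E"
  shows "(\<Sum>k<N. real (degree N E k)) = 2 * real (num_edges N E)"
proof -
  let ?e = "\<lambda>i j. if E i j then 1 else (0::real)"
  have "(\<Sum>k<N. real (degree N E k)) = (\<Sum>i<N. \<Sum>j<N. ?e i j)"
    unfolding Defs.degree_def by (simp add: of_nat_card_filter_lessThan)
  also have "\<dots> = 2 * (\<Sum>j<N. \<Sum>i<j. ?e i j)"
  proof -
    have "\<And>i j. ?e i j = ?e j i" and "\<And>i. ?e i i = 0"
      using assms unfolding simple_graph_def by auto
    then show ?thesis using sum_lower_triangle_symmetric[of ?e N] by simp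
  qed
  also have "\<dots> = 2 * real (num_edges N E)"
    by (simp add: of_nat_num_edges)
  finally show ?thesis .
qed

lemma sum_pairs_edge_indicator:
  "(\<Sum>j<n. \<Sum>i<j. if E i j then c else 0) = c * real (num_edges n E)"
  unfolding of_nat_num_edges sum_distrib_left by (intro sum.cong refl) simp

theorem theorem3:
  fixes N :: nat and E :: "nat \<Rightarrow> nat \<Rightarrow> bool"
  assumes "simple_graph N E" and "connected_graph N E" and "N > 2"
  shows "add_deg_kirchhoff N E \<ge>
           real N * (real N - 2)
           + 2 * real (num_edges N E) * (\<Sum>j<N. 1 / real (degree N E j))
           - 4 * real (num_edges N E) / (1 + real (Min (degree N E ` {..<N})))"
proof -
  define d where "d = (\<lambda>k. real (degree N E k))"
  define c where "c = 4 / (1 + real (Min (degree N E ` {..<N})))"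
  have "d k \<noteq> 0" if "k < N" for k
    using degree_ge_1[OF assms(1,2) _ that] assms(3) unfolding d_def by simp
  then have "(\<Sum>j<N. \<Sum>i<j. (d i + d j) * (1 / d i + 1 / d j))
      = real N * (real N - 2) + (\<Sum>k<N. d k) * (\<Sum>k<N. 1 / d k)"
    by (rule sum_pairs_sum_mult_sum_inverse)
  also have "(\<Sum>k<N. d k) * (\<Sum>k<N. 1 / d k)
      = 2 * real (num_edges N E) * (\<Sum>j<N. 1 / real (degree N E j))"
    using sum_degree_eq_twice_num_edges[OF assms(1)] unfolding d_def by simp
  finally have pairs: "(\<Sum>j<N. \<Sum>i<j. (d i + d j) * (1 / d i + 1 / d j))
      = real N * (real N - 2) + 2 * real (num_edges N E) * (\<Sum>j<N. 1 / real (degree N E j))" .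
  have edges: "(\<Sum>j<N. \<Sum>i<j. if E i j then c else 0)
      = 4 * real (num_edges N E) / (1 + real (Min (degree N E ` {..<N})))"
    unfolding sum_pairs_edge_indicator c_def by simp
  have "(\<Sum>j<N. \<Sum>i<j. (d i + d j) * (1 / d i + 1 / d j) - (if E i j then c else 0))
      \<le> add_deg_kirchhoff N E"
    unfolding add_deg_kirchhoff_def d_def c_def
    by (intro sum_mono) (use degree_sum_mult_eff_resistance_ge[OF assms] in auto)
  then show ?thesis unfolding sum_subtractf pairs edges by linarith
qed

end
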